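(* Let $s=(s_{i,m})_{1\le i\le b,1\le m\le M}$ be a matrix with $1\ge s_{1,m}\ge s_{2,m}\ge\cdots\ge s_{b,m}\ge0$ for each $m$ and $\sum_m s_{1,m}\le1$, and put $s_i=\sum_m s_{i,m}$. Suppose $$s_1\ge\lambda+(k-\zeta-6)\Delta\quad\text{and}\quad s_{1,m}\ge\lambda v_m-\theta_m\Delta\ \ \text{for all }1\le m\le M.$$ Then $$\left(\lambda+\Delta-\sum_{m=1}^M w_m s_{1,m}\right)\mathbb I\Bigl\{\sum_{i=1}^b s_i>\lambda+k\Delta+\tfrac1N\Bigr\}\le0.$$
   Context: Parameters: integers $N\ge2$, $b\ge1$, $M\ge2$; $\lambda=1-N^{-\alpha}$ with $0<\alpha<1/2$; $\Delta=\frac{\log N}{\sqrt N}$. Coxian parameters $\mu_1,\dots,\mu_M>0$, $p_1,\dots,p_{M-1}\in[0,1)$; $v_m=\prod_{i=1}^{m-1}p_i/\mu_m$ with $\sum_mv_m=1$; $\bar v=\min_mv_m$. $w_m=(1-p_m)\mu_m$ for $m<M$ and $w_M=\mu_M$; $w_u=\max_mw_m$, $w_l=\min_mw_m$. For $2\le m\le M$: $a_m=\frac{\mu_m}{p_1\mu_1+\mu_m}$, $b_m=(1-a_m)(1+\sum_{r=m+1}^M\frac{v_r}{v_1})-\frac{a_mv_m}{v_1}$; $\xi=\sum_{m=2}^Mb_m\prod_{j=m+1}^Ma_j$ (asserted $0<\xi<1$); $C=\sqrt{\frac{2\bar v^2\log(1/\xi)}{3M+(3M+4)\log(1/\xi)}}$;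 $\theta_m=\frac{6\mu_1v_m+5(m-1)v_m}{C}$; $\zeta=\frac{4w_ub}{w_l}\bigl[(\frac1{w_l}-\frac1{w_u})\sum_m\theta_mw_m+\frac1{w_l}+6\bigr]$; $k=\frac{\sum_m\theta_mw_m}{w_u}+(1+\frac{w_l}{4w_ub})\zeta-\sum_m\theta_m$. *)

theory Defs
  imports Complex_Main
begin

text \<open>Coxian parameters: \<open>mu m\<close> for \<open>1 \<le> m \<le> M\<close>, \<open>p m\<close> for \<open>1 \<le> m \<le> M-1\<close>.\<close>

definition cox_v :: "(nat \<Rightarrow> real) \<Rightarrow> (nat \<Rightarrow> real) \<Rightarrow> nat \<Rightarrow> real" where
  "cox_v mu p m = (\<Prod>i=1..<m. p i) / mu m"

definition cox_w :: "nat \<Rightarrow> (nat \<Rightarrow> real) \<Rightarrow> (nat \<Rightarrow> real) \<Rightarrow> nat \<Rightarrow> real" where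
  "cox_w M mu p m = (if m < M then (1 - p m) * mu m else mu m)"

definition w_up :: "nat \<Rightarrow> (nat \<Rightarrow> real) \<Rightarrow> (nat \<Rightarrow> real) \<Rightarrow> real" where
  "w_up M mu p = Max (cox_w M mu p ` {1..M})"

definition w_low :: "nat \<Rightarrow> (nat \<Rightarrow> real) \<Rightarrow> (nat \<Rightarrow> real) \<Rightarrow> real" where
  "w_low M mu p = Min (cox_w M mu p ` {1..M})"

definition v_bar :: "nat \<Rightarrow> (nat \<Rightarrow> real) \<Rightarrow> (nat \<Rightarrow> real) \<Rightarrow> real" where
  "v_bar M mu p = Min (cox_v mu p ` {1..M})"

definition cox_a :: "(nat \<Rightarrow> real) \<Rightarrow> (nat \<Rightarrow> real) \<Rightarrow> nat \<Rightarrow> real" where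
  "cox_a mu p m = mu m / (p 1 * mu 1 + mu m)"

definition cox_b :: "nat \<Rightarrow> (nat \<Rightarrow> real) \<Rightarrow> (nat \<Rightarrow> real) \<Rightarrow> nat \<Rightarrow> real" where
  "cox_b M mu p m =
     (1 - cox_a mu p m) * (1 + (\<Sum>r=m+1..M. cox_v mu p r / cox_v mu p 1))
     - cox_a mu p m * cox_v mu p m / cox_v mu p 1"

definition cox_xi :: "nat \<Rightarrow> (nat \<Rightarrow> real) \<Rightarrow> (nat \<Rightarrow> real) \<Rightarrow> real" where
  "cox_xi M mu p = (\<Sum>m=2..M. cox_b M mu p m * (\<Prod>j=m+1..M. cox_a mu p j))"

definition cox_C :: "nat \<Rightarrow> (nat \<Rightarrow> real) \<Rightarrow> (nat \<Rightarrow> real) \<Rightarrow> real" where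
  "cox_C M mu p =
     sqrt (2 * (v_bar M mu p)^2 * ln (1 / cox_xi M mu p) /
           (3 * real M + (3 * real M + 4) * ln (1 / cox_xi M mu p)))"

definition cox_theta :: "nat \<Rightarrow> (nat \<Rightarrow> real) \<Rightarrow> (nat \<Rightarrow> real) \<Rightarrow> nat \<Rightarrow> real" where
  "cox_theta M mu p m =
     (6 * mu 1 * cox_v mu p m + 5 * (real m - 1) * cox_v mu p m) / cox_C M mu p"

definition cox_zeta :: "nat \<Rightarrow> nat \<Rightarrow> (nat \<Rightarrow> real) \<Rightarrow> (nat \<Rightarrow> real) \<Rightarrow> real" where
  "cox_zeta b M mu p =
     4 * w_up M mu p * real b / w_low M mu p *
     ((1 / w_low M mu p - 1 / w_up M mu p) *
        (\<Sum>m=1..M. cox_theta M mu p m * cox_w M mu p m)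
      + 1 / w_low M mu p + 6)"

definition cox_k :: "nat \<Rightarrow> nat \<Rightarrow> (nat \<Rightarrow> real) \<Rightarrow> (nat \<Rightarrow> real) \<Rightarrow> real" where
  "cox_k b M mu p =
     (\<Sum>m=1..M. cox_theta M mu p m * cox_w M mu p m) / w_up M mu p
     + (1 + w_low M mu p / (4 * w_up M mu p * real b)) * cox_zeta b M mu p
     - (\<Sum>m=1..M. cox_theta M mu p m)"

end

theory Submission
  imports Defs
begin

text \<open>The first factor is already nonpositive, whatever the indicator. Writing
  \<open>s\<^sub>1\<^sub>,\<^sub>m = \<lambda> v\<^sub>m - \<theta>\<^sub>m \<Delta> + e\<^sub>m\<close> with \<open>e\<^sub>m \<ge> 0\<close> and using \<open>\<Sum>\<^sub>m w\<^sub>m v\<^sub>m = 1\<close>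
  (a telescoping sum), one gets
  \<open>\<Sum>\<^sub>m w\<^sub>m s\<^sub>1\<^sub>,\<^sub>m \<ge> \<lambda> - \<Delta> \<Sum>\<^sub>m \<theta>\<^sub>m w\<^sub>m + w\<^sub>l \<Sum>\<^sub>m e\<^sub>m\<close>, and the lower bound on \<open>s\<^sub>1\<close> gives
  \<open>\<Sum>\<^sub>m e\<^sub>m \<ge> (k - \<zeta> - 6 + \<Sum>\<^sub>m \<theta>\<^sub>m) \<Delta>\<close>. The definitions of \<open>k\<close> and \<open>\<zeta>\<close> give exactly
  \<open>w\<^sub>l (k - \<zeta> - 6 + \<Sum>\<^sub>m \<theta>\<^sub>m) = \<Sum>\<^sub>m \<theta>\<^sub>m w\<^sub>m + 1\<close>, hence \<open>\<Sum>\<^sub>m w\<^sub>m s\<^sub>1\<^sub>,\<^sub>m \<ge> \<lambda> + \<Delta>\<close>.\<close>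

lemma sum_mult_ge_min_weight:
  fixes w x y :: "'a \<Rightarrow> real" and c :: real
  assumes "\<forall>m\<in>A. c \<le> w m" and "\<forall>m\<in>A. y m \<le> x m"
  shows "(\<Sum>m\<in>A. w m * y m) + c * ((\<Sum>m\<in>A. x m) - (\<Sum>m\<in>A. y m)) \<le> (\<Sum>m\<in>A. w m * x m)"
proof -
  have "c * ((\<Sum>m\<in>A. x m) - (\<Sum>m\<in>A. y m)) = (\<Sum>m\<in>A. c * (x m - y m))"
    by (simp add: right_diff_distrib sum_distrib_left sum_subtractf)
  also have "\<dots> \<le> (\<Sum>m\<in>A. w m * (x m - y m))"
    using assms by (intro sum_mono mult_right_mono) auto
  also have "\<dots> = (\<Sum>m\<in>A. w m * x m) - (\<Sum>m\<in>A. w m * y m)"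
    by (simp add: right_diff_distrib sum_subtractf)
  finally show ?thesis by simp
qed

lemma cox_w_pos:
  assumes "\<forall>m\<in>{1..M}. mu m > 0" and "\<forall>m\<in>{1..M-1}. p m < 1" and "m \<in> {1..M}"
  shows "cox_w M mu p m > 0"
  using assms by (auto simp: cox_w_def)

lemma w_low_le_cox_w:
  assumes "m \<in> {1..M}"
  shows "w_low M mu p \<le> cox_w M mu p m"
  using assms unfolding w_low_def by simp

lemma w_low_pos:
  assumes "M \<ge> 1" and "\<forall>m\<in>{1..M}. cox_w M mu p m > 0"
  shows "w_low M mu p > 0"
  using assms unfolding w_low_def by (simp add: Min_gr_iff)

lemma w_up_pos:
  assumes "M \<ge> 1" and "\<forall>m\<in>{1..M}. cox_w M mu p m > 0"
  shows "w_up M mu p > 0"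
proof -
  have "cox_w M mu p 1 \<le> w_up M mu p"
    using assms(1) unfolding w_up_def by simp
  with assms show ?thesis by force
qed

lemma sum_cox_w_mult_cox_v:
  assumes "M \<ge> 1" and mu_nz: "\<forall>m\<in>{1..M}. mu m \<noteq> 0"
  shows "(\<Sum>m=1..M. cox_w M mu p m * cox_v mu p m) = 1"
proof -
  define P where "P m = (\<Prod>i=1..<m. p i)" for m
  have step: "cox_w M mu p m * cox_v mu p m = P m - P (Suc m)" if "m \<in> {1..<M}" for m
  proof -
    have "P (Suc m) = P m * p m"
      using that unfolding P_def by (simp add: prod.atLeastLessThan_Suc)
    with that mu_nz show ?thesis
      unfolding cox_w_def cox_v_def P_def[symmetric] by (simp add: field_simps)
  qed
  have last: "cox_w M mu p M * cox_v mu p M = P M"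
    using mu_nz assms(1) unfolding cox_w_def cox_v_def P_def by simp
  have "(\<Sum>m=1..M. cox_w M mu p m * cox_v mu p m)
      = P M + (\<Sum>m=1..<M. P m - P (Suc m))"
    using assms(1) last step by (simp add: sum.last_plus)
  also have "(\<Sum>m=1..<M. P m - P (Suc m)) = P 1 - P M"
    using sum_Suc_diff'[of 1 M "\<lambda>m. - P m"] assms(1) by simp
  finally show ?thesis
    by (simp add: P_def)
qed

lemma w_low_mult_k_minus_zeta:
  assumes "w_low M mu p \<noteq> 0" and "w_up M mu p \<noteq> 0" and "b \<ge> 1"
  shows "w_low M mu p * (cox_k b M mu p - cox_zeta b M mu p - 6 + (\<Sum>m=1..M. cox_theta M mu p m))
       = (\<Sum>m=1..M. cox_theta M mu p m * cox_w M mu p m) + 1"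
  using assms unfolding cox_k_def cox_zeta_def by (simp add: field_simps)

lemma cox_weighted_sum_ge:
  fixes l d :: real and x :: "nat \<Rightarrow> real"
  assumes M: "M \<ge> 1" and b: "b \<ge> 1"
    and mu_pos: "\<forall>m\<in>{1..M}. mu m > 0"
    and p_lt: "\<forall>m\<in>{1..M-1}. p m < 1"
    and v_sum: "(\<Sum>m=1..M. cox_v mu p m) = 1"
    and total: "(\<Sum>m=1..M. x m) \<ge> l + (cox_k b M mu p - cox_zeta b M mu p - 6) * d"
    and coord: "\<forall>m\<in>{1..M}. x m \<ge> l * cox_v mu p m - cox_theta M mu p m * d"
  shows "l + d \<le> (\<Sum>m=1..M. cox_w M mu p m * x m)"
proof -
  let ?w = "cox_w M mu p" and ?y = "\<lambda>m. l * cox_v mu p m - cox_theta M mu p m * d"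
  define wl where "wl = w_low M mu p"
  define T where "T = (\<Sum>m=1..M. cox_theta M mu p m * ?w m)"
  define S where "S = (\<Sum>m=1..M. cox_theta M mu p m)"
  have w_pos: "\<forall>m\<in>{1..M}. ?w m > 0"
    using cox_w_pos[OF mu_pos p_lt] by blast
  have wl_pos: "wl > 0"
    unfolding wl_def using w_low_pos[OF M w_pos] .
  have "(\<Sum>m=1..M. ?w m * cox_v mu p m) = 1"
    using M mu_pos by (intro sum_cox_w_mult_cox_v) auto
  moreover have "(\<Sum>m=1..M. ?w m * ?y m)
      = l * (\<Sum>m=1..M. ?w m * cox_v mu p m) - d * T"
    by (simp add: T_def sum_subtractf sum_distrib_left algebra_simps)
  ultimately have wy: "(\<Sum>m=1..M. ?w m * ?y m) = l - d * T"
    by simp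
  have y_sum: "(\<Sum>m=1..M. ?y m) = l - d * S"
    using v_sum by (simp add: S_def sum_subtractf sum_distrib_left[symmetric] mult.commute)
  have key: "wl * (cox_k b M mu p - cox_zeta b M mu p - 6 + S) = T + 1"
    using w_low_mult_k_minus_zeta[of M mu p b] wl_pos w_up_pos[OF M w_pos] b
    by (simp add: wl_def T_def S_def)
  have "l + d = l - d * T + (wl * (cox_k b M mu p - cox_zeta b M mu p - 6 + S)) * d"
    unfolding key by (simp add: algebra_simps)
  also have "\<dots> = l - d * T + wl * ((cox_k b M mu p - cox_zeta b M mu p - 6) * d + d * S)"
    by (simp add: algebra_simps)
  also have "\<dots> \<le> l - d * T + wl * ((\<Sum>m=1..M. x m) - (l - d * S))"
    using total wl_pos by (intro add_left_mono mult_left_mono) auto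
  also have "\<dots> \<le> (\<Sum>m=1..M. ?w m * x m)"
    using sum_mult_ge_min_weight[of "{1..M}" wl ?w ?y x] coord wy y_sum
    by (simp add: wl_def w_low_le_cox_w)
  finally show ?thesis .
qed

theorem lemma13:
  fixes N b M :: nat and \<alpha> :: real
    and mu p :: "nat \<Rightarrow> real" and s :: "nat \<Rightarrow> nat \<Rightarrow> real"
  assumes N: "N \<ge> 2" and b: "b \<ge> 1" and M: "M \<ge> 2"
    and alpha: "0 < \<alpha>" "\<alpha> < 1/2"
    and mu_pos: "\<forall>m\<in>{1..M}. mu m > 0"
    and p_range: "\<forall>m\<in>{1..M-1}. 0 \<le> p m \<and> p m < 1"
    and v_sum: "(\<Sum>m=1..M. cox_v mu p m) = 1"
    and xi: "0 < cox_xi M mu p" "cox_xi M mu p < 1"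
    and s_mono: "\<forall>m\<in>{1..M}. s 1 m \<le> 1 \<and> s b m \<ge> 0 \<and>
                    (\<forall>i\<in>{1..<b}. s (i+1) m \<le> s i m)"
    and s1_sum: "(\<Sum>m=1..M. s 1 m) \<le> 1"
    and h1: "(\<Sum>m=1..M. s 1 m) \<ge> (1 - real N powr (-\<alpha>))
               + (cox_k b M mu p - cox_zeta b M mu p - 6) * (ln (real N) / sqrt (real N))"
    and h2: "\<forall>m\<in>{1..M}. s 1 m \<ge> (1 - real N powr (-\<alpha>)) * cox_v mu p m
               - cox_theta M mu p m * (ln (real N) / sqrt (real N))"
  shows "((1 - real N powr (-\<alpha>)) + ln (real N) / sqrt (real N)
            - (\<Sum>m=1..M. cox_w M mu p m * s 1 m))
         * (if (\<Sum>i=1..b. \<Sum>m=1..M. s i m) >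
               (1 - real N powr (-\<alpha>)) + cox_k b M mu p * (ln (real N) / sqrt (real N))
               + 1 / real N
            then 1 else 0) \<le> 0"
proof -
  have "(1 - real N powr (-\<alpha>)) + ln (real N) / sqrt (real N)
          \<le> (\<Sum>m=1..M. cox_w M mu p m * s 1 m)"
    using M b mu_pos p_range v_sum h1 h2 by (intro cox_weighted_sum_ge) auto
  then show ?thesis
    by (simp add: mult_nonpos_nonneg)
qed

end
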